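(* Let $\mathcal H=\{h_1,\dots,h_k\}$ be an admissible set and $0\le\ell\le k$. If $d<R$ and $d$ is squarefree, then \[ |\lambda_{d,\ell}|\ll(\log R)^{k+\ell}, \] with implied constant depending only on $k$.
   Context: $\mathcal H$ is a set of $k\ge 2$ distinct integers and $P(n;\mathcal H)=\prod_{h\in\mathcal H}(n+h)$. For squarefree $d$, $\nu_d$ is the number of residue classes $a$ mod $d$ with $P(a;\mathcal H)\equiv0\pmod d$ (so $\nu_d=\prod_{p\mid d}\nu_p$). The set $\mathcal H$ is admissible if $\nu_p<p$ for all $p$. Let $\mathfrak S(\mathcal H)=\prod_p(1-\nu_p/p)(1-1/p)^{-k}$. For squarefree $d$, $f(d)=d/\nu_d$ and $f_1(d)=\prod_{p\mid d}(p-\nu_p)/\nu_p$. For $R>1$, \[ \lambda_{d,\ell}=\mu(d)\frac{f(d)}{f_1(d)}\frac{\mathfrak S(\mathcal H)}{\ell!}\sum_{\substack{r<R/d\\(r,d)=1}}\frac{\mu^2(r)}{f_1(r)}\Big(\log\frac{R}{rd}\Big)^\ell\quad (d<R). \] *)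

theory Defs
  imports "HOL-Analysis.Analysis" "HOL-Computational_Algebra.Primes" "HOL-Computational_Algebra.Squarefree"
begin

definition Ppoly :: "int set \<Rightarrow> int \<Rightarrow> int" where
  "Ppoly H n = (\<Prod>h\<in>H. n + h)"

definition nu :: "int set \<Rightarrow> nat \<Rightarrow> nat" where
  "nu H d = card {a::nat. a < d \<and> int d dvd Ppoly H (int a)}"

definition admissible :: "int set \<Rightarrow> bool" where
  "admissible H \<longleftrightarrow> (\<forall>p::nat. prime p \<longrightarrow> nu H p < p)"

definition sing_series :: "int set \<Rightarrow> real" where
  "sing_series H = lim (\<lambda>n. \<Prod>p\<in>{p::nat. prime p \<and> p \<le> n}.
       (1 - real (nu H p) / real p) * (1 - 1 / real p) powi (- int (card H)))"

definition ff :: "int set \<Rightarrow> nat \<Rightarrow> real" where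
  "ff H d = real d / real (nu H d)"

definition ff1 :: "int set \<Rightarrow> nat \<Rightarrow> real" where
  "ff1 H d = (\<Prod>p\<in>prime_factors d. (real p - real (nu H p)) / real (nu H p))"

definition mu :: "nat \<Rightarrow> int" where
  "mu n = (if squarefree n then (-1) ^ card (prime_factors n) else 0)"

definition lambda_w :: "int set \<Rightarrow> real \<Rightarrow> nat \<Rightarrow> nat \<Rightarrow> real" where
  "lambda_w H R d l = real_of_int (mu d) * ff H d / ff1 H d * sing_series H / fact l *
     (\<Sum>r\<in>{r::nat. 0 < r \<and> real r < R / real d \<and> coprime r d}.
        real_of_int ((mu r)\<^sup>2) / ff1 H r * (ln (R / (real r * real d))) ^ l)"

end

theory Submission
  imports Defs "HOL-Number_Theory.Cong"
begin

text \<open>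
  Write g(p) = nu_p / (p - nu_p), so that 1 / f_1(r) is the product of g(p) over p | r.
  As |mu(d)| <= 1, l! >= 1 and log (R / rd) <= log R, the weight |lambda_{d,l}| is at most
  f(d)/f_1(d) * S(H) * (log R)^l times the sum of g(r) over squarefree r < R coprime to d.
  Here f(d)/f_1(d) is the product of 1 + g(p) = p / (p - nu_p) over p | d, and the sum is at
  most the same product over the primes p <= R not dividing d; together at most the product
  over all p <= R. Beyond a bound depending on H we have nu_p = k, the Euler factors of S(H)
  are then at most 1, and S(H) is at most its partial product up to R. Multiplying, the nu_p
  cancel and |lambda_{d,l}| <= (log R)^l * prod_{p <= R} (1 - 1/p)^(-k). An elementary form of
  Mertens' theorem, prod_{p <= N} (1 - 1/p)^(-1) << log N, obtained from Chebyshev's bound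
  prod_{p <= n} p <= 4^n by partial summation, gives the claim with a constant depending
  only on k.
\<close>

section \<open>Chebyshev's and Mertens' estimates\<close>

definition primes_upto :: "nat \<Rightarrow> nat set" where
  "primes_upto n = {p. prime p \<and> p \<le> n}"

lemma finite_primes_upto [simp]: "finite (primes_upto n)"
  unfolding primes_upto_def by simp

lemma primes_upto_Suc:
  "primes_upto (Suc n) = (if prime (Suc n) then insert (Suc n) (primes_upto n) else primes_upto n)"
  unfolding primes_upto_def by (auto simp: le_Suc_eq)

lemma Suc_notin_primes_upto: "Suc n \<notin> primes_upto n"
  unfolding primes_upto_def by auto

lemma primes_upto_2: "primes_upto 2 = {2}"
  unfolding primes_upto_def using prime_ge_2_nat by (auto intro: antisym)

lemma primes_upto_subset: "primes_upto n \<subseteq> {2..n}"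
  unfolding primes_upto_def using prime_ge_2_nat by auto

lemma prod_primes_dvd:
  fixes n :: nat
  assumes "n > 0" "\<And>p. p \<in> A \<Longrightarrow> prime p \<and> p dvd n"
  shows "\<Prod>A dvd n"
proof -
  have sub: "A \<subseteq> prime_factors n"
    using assms by (auto simp: prime_factors_dvd)
  have "\<Prod>A dvd \<Prod>(prime_factors n)"
    by (rule prod_dvd_prod_subset[OF _ sub]) simp
  also have "\<Prod>(prime_factors n) dvd (\<Prod>p\<in>prime_factors n. p ^ multiplicity p n)"
    by (intro prod_dvd_prod dvd_power) (auto simp: prime_factors_multiplicity)
  also have "\<dots> = n"
    using prod_prime_factors[of n] assms(1) by simp
  finally show ?thesis .
qed

lemma odd_central_binomial_le: "(2 * m + 1) choose m \<le> 4 ^ m"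
proof -
  have "2 * ((2 * m + 1) choose m) = (\<Sum>i\<in>{m, m + 1}. (2 * m + 1) choose i)"
    using binomial_symmetric[of m "2 * m + 1"] by simp
  also have "\<dots> \<le> (\<Sum>i\<le>2 * m + 1. (2 * m + 1) choose i)"
    by (intro sum_mono2) auto
  also have "\<dots> = 2 ^ (2 * m + 1)"
    by (rule choose_row_sum)
  also have "\<dots> = 2 * 4 ^ m"
    by (simp add: power_mult)
  finally show ?thesis by simp
qed

text \<open>The primes in \<open>(m + 1, 2m + 1]\<close> divide the numerator of
  \<open>(2m + 1)! / (m! (m + 1)!)\<close> but not its denominator.\<close>
lemma prod_primes_between_dvd_binomial:
  "\<Prod>{p. prime p \<and> m + 1 < p \<and> p \<le> 2 * m + 1} dvd (2 * m + 1) choose m"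
proof (rule prod_primes_dvd)
  fix p assume "p \<in> {p. prime p \<and> m + 1 < p \<and> p \<le> 2 * m + 1}"
  then have p: "prime p" "m + 1 < p" "p \<le> 2 * m + 1" by auto
  have "fact m * fact (2 * m + 1 - m) * ((2 * m + 1) choose m) = (fact (2 * m + 1) :: nat)"
    by (rule binomial_fact_lemma) simp
  moreover have "p dvd fact (2 * m + 1)"
    using p by (intro dvd_fact) (auto simp: prime_ge_1_nat)
  ultimately have "p dvd fact m * fact (m + 1) * ((2 * m + 1) choose m)"
    by (simp del: fact_Suc)
  moreover have "\<not> p dvd fact m" "\<not> p dvd fact (m + 1)"
    using p by (simp_all only: prime_dvd_fact_iff)
  ultimately show "prime p \<and> p dvd (2 * m + 1) choose m"
    using p by (auto simp: prime_dvd_mult_iff)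
qed (simp add: zero_less_binomial)

lemma primorial_odd_le: "\<Prod>(primes_upto (2 * m + 1)) \<le> \<Prod>(primes_upto (m + 1)) * 4 ^ m"
proof -
  define B where "B = {p. prime p \<and> m + 1 < p \<and> p \<le> 2 * m + 1}"
  have "\<Prod>B dvd (2 * m + 1) choose m"
    unfolding B_def by (rule prod_primes_between_dvd_binomial)
  then have "\<Prod>B \<le> (2 * m + 1) choose m"
    by (rule dvd_imp_le) (simp add: zero_less_binomial)
  then have "\<Prod>B \<le> 4 ^ m"
    using odd_central_binomial_le[of m] by linarith
  moreover have "primes_upto (2 * m + 1) = primes_upto (m + 1) \<union> B"
    unfolding primes_upto_def B_def by auto
  then have "\<Prod>(primes_upto (2 * m + 1)) = \<Prod>(primes_upto (m + 1)) * \<Prod>B"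
    by (simp add: prod.union_disjoint primes_upto_def B_def disjoint_iff)
  ultimately show ?thesis
    by simp
qed

lemma primorial_le_four_pow: "\<Prod>(primes_upto n) \<le> 4 ^ n"
proof (induction n rule: less_induct)
  case (less n)
  consider "n \<le> 2" | "n > 2" "even n" | m where "n = 2 * m + 1" "m \<ge> 1"
  proof -
    have "n \<le> 2 \<or> (n > 2 \<and> even n) \<or> (\<exists>m. n = 2 * m + 1 \<and> m \<ge> 1)"
      by presburger
    then show ?thesis using that by blast
  qed
  then show ?case
  proof cases
    case 1
    then have "n = 0 \<or> n = 1 \<or> n = 2" by auto
    moreover have "primes_upto 0 = {}" "primes_upto 1 = {}"
      using primes_upto_subset[of 0] primes_upto_subset[of 1] by auto
    ultimately show ?thesis by (auto simp: primes_upto_2)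
  next
    case 2
    then have "\<not> prime n" using prime_odd_nat[of n] by auto
    then have "primes_upto n = primes_upto (n - 1)"
      using 2 primes_upto_Suc[of "n - 1"] by simp
    then have "\<Prod>(primes_upto n) \<le> 4 ^ (n - 1)"
      using less[of "n - 1"] 2 by simp
    also have "\<dots> \<le> 4 ^ n"
      by (rule power_increasing) simp_all
    finally show ?thesis .
  next
    case 3
    then have "\<Prod>(primes_upto n) \<le> \<Prod>(primes_upto (m + 1)) * 4 ^ m"
      using primorial_odd_le[of m] by (simp only:)
    also have "\<dots> \<le> 4 ^ (m + 1) * 4 ^ m"
      using less[of "m + 1"] 3 by simp
    also have "\<dots> = 4 ^ n"
      by (simp add: 3 power_add[symmetric])
    finally show ?thesis .
  qed
qed

lemma sum_ln_primes_upto_le: "(\<Sum>p\<in>primes_upto n. ln (real p)) \<le> real n * ln 4"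
proof -
  have pos: "\<And>p. p \<in> primes_upto n \<Longrightarrow> 0 < real p"
    by (simp add: primes_upto_def prime_gt_0_nat)
  have "(\<Sum>p\<in>primes_upto n. ln (real p)) = ln (real (\<Prod>(primes_upto n)))"
    using pos by (simp add: ln_prod)
  also have "\<dots> \<le> ln (real (4 ^ n))"
  proof (rule ln_mono)
    show "real (\<Prod>(primes_upto n)) \<le> real (4 ^ n)"
      using primorial_le_four_pow[of n] by (simp only: of_nat_le_iff)
    show "0 < real (\<Prod>(primes_upto n))"
      using pos by (simp only: of_nat_prod) (rule prod_pos)
  qed
  also have "\<dots> = real n * ln 4"
    by (simp add: ln_realpow)
  finally show ?thesis .
qed

lemma sum_ln_prime_factors_le:
  assumes "j > 0"
  shows "(\<Sum>p\<in>prime_factors j. ln (real p)) \<le> ln (real j)"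
proof -
  have pos: "\<And>p. p \<in> prime_factors j \<Longrightarrow> 0 < real p"
    by (simp add: in_prime_factors_iff prime_gt_0_nat)
  have "\<Prod>(prime_factors j) \<le> j"
    using assms by (intro dvd_imp_le prod_primes_dvd) auto
  moreover have "0 < \<Prod>(prime_factors j)"
    by (rule prod_pos) (simp add: in_prime_factors_iff prime_gt_0_nat)
  ultimately have "ln (real (\<Prod>(prime_factors j))) \<le> ln (real j)"
    by (intro ln_mono) (simp_all only: of_nat_le_iff of_nat_0_less_iff)
  then show ?thesis
    using pos by (simp add: ln_prod)
qed

lemma card_multiples_atLeastAtMost:
  assumes "p > 0"
  shows "card {j\<in>{1..n}. p dvd j} = n div p"
proof -
  have "{j\<in>{1..n}. p dvd j} = (\<lambda>i. i * p) ` {1..n div p}"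
  proof (intro equalityI subsetI)
    fix j assume "j \<in> {j\<in>{1..n}. p dvd j}"
    then obtain i where "j = i * p" "1 \<le> j" "j \<le> n"
      by (auto elim!: dvdE simp: mult.commute)
    then show "j \<in> (\<lambda>i. i * p) ` {1..n div p}"
      using assms by (auto simp: less_eq_div_iff_mult_less_eq)
  qed (use assms in \<open>auto simp: less_eq_div_iff_mult_less_eq\<close>)
  moreover have "inj_on (\<lambda>i. i * p) {1..n div p}"
    using assms by (auto simp: inj_on_def)
  ultimately show ?thesis
    by (simp add: card_image)
qed

text \<open>Double counting of the pairs \<open>p | j \<le> n\<close>, using \<open>\<Sum>\<^sub>p\<^sub>|\<^sub>j ln p \<le> ln j\<close>.\<close>
lemma sum_ln_primes_upto_mult_div_le:
  "(\<Sum>p\<in>primes_upto n. ln (real p) * real (n div p)) \<le> real n * ln (real n)"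
proof -
  define P where "P = primes_upto n"
  have "(\<Sum>p\<in>P. ln (real p) * real (n div p)) = (\<Sum>p\<in>P. \<Sum>j\<in>{j\<in>{1..n}. p dvd j}. ln (real p))"
  proof (intro sum.cong refl)
    fix p assume "p \<in> P"
    then have "card {j\<in>{1..n}. p dvd j} = n div p"
      by (intro card_multiples_atLeastAtMost) (simp add: P_def primes_upto_def prime_gt_0_nat)
    then show "ln (real p) * real (n div p) = (\<Sum>j\<in>{j\<in>{1..n}. p dvd j}. ln (real p))"
      by simp
  qed
  also have "\<dots> = (\<Sum>p\<in>P. \<Sum>j\<in>{1..n}. if p dvd j then ln (real p) else 0)"
    by (simp only: sum.inter_filter[OF finite_atLeastAtMost])
  also have "\<dots> = (\<Sum>j\<in>{1..n}. \<Sum>p\<in>P. if p dvd j then ln (real p) else 0)"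
    by (rule sum.swap)
  also have "\<dots> = (\<Sum>j\<in>{1..n}. \<Sum>p\<in>{p\<in>P. p dvd j}. ln (real p))"
    by (simp only: sum.inter_filter[OF finite_primes_upto] P_def)
  also have "\<dots> \<le> (\<Sum>j\<in>{1..n}. ln (real n))"
  proof (intro sum_mono)
    fix j assume j: "j \<in> {1..n}"
    have "{p\<in>P. p dvd j} = prime_factors j"
      using j by (auto simp: P_def primes_upto_def prime_factors_dvd dest: dvd_imp_le)
    then have "(\<Sum>p\<in>{p\<in>P. p dvd j}. ln (real p)) = (\<Sum>p\<in>prime_factors j. ln (real p))"
      by simp
    also have "\<dots> \<le> ln (real j)"
      using j by (intro sum_ln_prime_factors_le) simp
    also have "\<dots> \<le> ln (real n)"
      using j by simp
    finally show "(\<Sum>p\<in>{p\<in>P. p dvd j}. ln (real p)) \<le> ln (real n)" .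
  qed
  finally show ?thesis
    by (simp add: P_def)
qed

text \<open>Mertens' first estimate: \<open>\<lfloor>n/p\<rfloor> > n/p - 1\<close> and Chebyshev's bound for \<open>\<Sum>\<^sub>p ln p\<close>.\<close>
lemma sum_ln_div_primes_upto_le:
  assumes "n > 0"
  shows "(\<Sum>p\<in>primes_upto n. ln (real p) / real p) \<le> ln (real n) + ln 4"
proof -
  define P where "P = primes_upto n"
  have "(\<Sum>p\<in>P. ln (real p) * (real n / real p - 1)) \<le> (\<Sum>p\<in>P. ln (real p) * real (n div p))"
  proof (intro sum_mono mult_left_mono)
    fix p
    show "real n / real p - 1 \<le> real (n div p)"
      using real_of_int_floor_gt_diff_one[of "real n / real p"]
      by (simp add: floor_divide_of_nat_eq)
  qed (auto simp: P_def primes_upto_def intro!: ln_ge_zero dest: prime_ge_1_nat)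
  moreover have "(\<Sum>p\<in>P. ln (real p) * (real n / real p - 1))
      = real n * (\<Sum>p\<in>P. ln (real p) / real p) - (\<Sum>p\<in>P. ln (real p))"
    by (simp add: sum_distrib_left sum_subtractf algebra_simps)
  ultimately have "real n * (\<Sum>p\<in>P. ln (real p) / real p) \<le> real n * (ln (real n) + ln 4)"
    using sum_ln_primes_upto_mult_div_le[of n] sum_ln_primes_upto_le[of n]
    by (simp add: P_def algebra_simps)
  then show ?thesis
    using assms by (simp add: P_def)
qed

lemma ln_sub_ln_ge:
  fixes x y :: real
  assumes "0 < x" "x \<le> y"
  shows "1 - x / y \<le> ln y - ln x"
  using ln_le_minus_one[of "x / y"] assms by (simp add: ln_div)

text \<open>Abel summation of \<open>1/p = (ln p / p) \<cdot> (1 / ln p)\<close>, run as an induction on \<open>N\<close>: the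
  left-hand side changes from \<open>N\<close> to \<open>N + 1\<close> only through the weight \<open>1 / ln N\<close>, and
  Mertens' first estimate bounds the resulting increment.\<close>
lemma sum_inverse_primes_upto_abel_le:
  assumes "N \<ge> 2"
  shows "(\<Sum>p\<in>primes_upto N. 1 / real p) - (\<Sum>p\<in>primes_upto N. ln (real p) / real p) / ln (real N)
     \<le> ln (ln (real N)) - ln (ln 2) + ln 4 * (1 / ln 2 - 1 / ln (real N))"
  using assms
proof (induction N rule: nat_induct_at_least)
  case base
  then show ?case by (simp add: primes_upto_2)
next
  case (Suc N)
  define A where "A = (\<Sum>p\<in>primes_upto N. ln (real p) / real p)"
  define S where "S = (\<Sum>p\<in>primes_upto N. 1 / real p)"
  have lnN: "0 < ln (real N)" "ln (real N) \<le> ln (real (Suc N))"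
    using Suc by simp_all
  have step: "(\<Sum>p\<in>primes_upto (Suc N). 1 / real p)
      - (\<Sum>p\<in>primes_upto (Suc N). ln (real p) / real p) / ln (real (Suc N))
      = S - A / ln (real (Suc N))"
  proof (cases "prime (Suc N)")
    case True
    then show ?thesis
      using Suc.hyps lnN Suc_notin_primes_upto[of N]
      by (simp add: primes_upto_Suc A_def S_def add_divide_distrib)
  qed (simp add: primes_upto_Suc A_def S_def)
  have "A \<le> ln (real N) + ln 4"
    using sum_ln_div_primes_upto_le[of N] Suc by (simp add: A_def)
  moreover have "0 \<le> 1 / ln (real N) - 1 / ln (real (Suc N))"
    using lnN by (simp add: frac_le)
  ultimately have "A * (1 / ln (real N) - 1 / ln (real (Suc N)))
      \<le> (ln (real N) + ln 4) * (1 / ln (real N) - 1 / ln (real (Suc N)))"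
    by (rule mult_right_mono)
  also have "\<dots> = (1 - ln (real N) / ln (real (Suc N))) + ln 4 * (1 / ln (real N) - 1 / ln (real (Suc N)))"
    using lnN by (simp add: algebra_simps)
  also have "\<dots> \<le> (ln (ln (real (Suc N))) - ln (ln (real N))) + ln 4 * (1 / ln (real N) - 1 / ln (real (Suc N)))"
    using ln_sub_ln_ge[OF lnN] by simp
  finally show ?case
    using Suc.IH unfolding step A_def[symmetric] S_def[symmetric] by (simp add: algebra_simps)
qed

lemma sum_inverse_primes_upto_le:
  assumes "N \<ge> 2"
  shows "(\<Sum>p\<in>primes_upto N. 1 / real p) \<le> ln (ln (real N)) + 1 + 2 * ln 4 / ln 2 - ln (ln 2)"
proof -
  have lnN: "ln 2 \<le> ln (real N)" "0 < ln (real N)"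
    using assms by simp_all
  have "(\<Sum>p\<in>primes_upto N. ln (real p) / real p) / ln (real N) \<le> (ln (real N) + ln 4) / ln (real N)"
    using sum_ln_div_primes_upto_le[of N] assms lnN by (intro divide_right_mono) auto
  also have "\<dots> = 1 + ln 4 / ln (real N)"
    using lnN by (simp add: add_divide_distrib)
  also have "\<dots> \<le> 1 + ln 4 / ln 2"
    using lnN by (simp add: frac_le)
  moreover have "0 \<le> ln 4 / ln (real N)"
    using lnN by simp
  ultimately show ?thesis
    using sum_inverse_primes_upto_abel_le[OF assms] by (simp add: right_diff_distrib)
qed

lemma sum_inverse_primes_upto_times_pred_le: "(\<Sum>p\<in>primes_upto N. 1 / (real p * (real p - 1))) \<le> 1"
proof -
  have telescope: "(\<Sum>j\<in>{2..n}. 1 / (real j * (real j - 1))) = 1 - 1 / real n" if "n \<ge> 1" for n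
    using that
  proof (induction n rule: nat_induct_at_least)
    case (Suc n)
    then have "{2..Suc n} = insert (Suc n) {2..n}" by auto
    then have "(\<Sum>j\<in>{2..Suc n}. 1 / (real j * (real j - 1))) = 1 / (real (Suc n) * real n) + (1 - 1 / real n)"
      using Suc by simp
    also have "\<dots> = 1 - 1 / real (Suc n)"
    proof -
      have "real n > 0" using Suc.hyps by simp
      then show ?thesis by (simp add: divide_simps) (simp add: algebra_simps)
    qed
    finally show ?case .
  qed simp
  show ?thesis
  proof (cases "N \<ge> 1")
    case True
    have "(\<Sum>p\<in>primes_upto N. 1 / (real p * (real p - 1))) \<le> (\<Sum>j\<in>{2..N}. 1 / (real j * (real j - 1)))"
      by (intro sum_mono2 primes_upto_subset) auto
    moreover have "0 \<le> 1 / real N" by simp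
    ultimately show ?thesis using telescope[OF True] by linarith
  next
    case False
    then have "primes_upto N = {}"
      using primes_upto_subset[of N] by auto
    then show ?thesis by simp
  qed
qed

lemma ln_inverse_one_minus_inverse_le:
  fixes x :: real
  assumes "x \<ge> 2"
  shows "ln (inverse (1 - 1 / x)) \<le> 1 / x + 1 / (x * (x - 1))"
proof -
  have "ln (inverse (1 - 1 / x)) \<le> inverse (1 - 1 / x) - 1"
    using assms by (intro ln_le_minus_one) simp
  also have "\<dots> = 1 / x + 1 / (x * (x - 1))"
    using assms by (simp add: field_simps)
  finally show ?thesis .
qed

lemma prod_inverse_one_minus_inverse_primes_upto_le_nat:
  assumes "N \<ge> 2"
  shows "(\<Prod>p\<in>primes_upto N. inverse (1 - 1 / real p))
    \<le> exp (2 + 2 * ln 4 / ln 2 - ln (ln 2)) * ln (real N)"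
proof -
  define c :: real where "c = 2 + 2 * ln 4 / ln 2 - ln (ln 2)"
  have p2: "real p \<ge> 2" if "p \<in> primes_upto N" for p
    using that prime_ge_2_nat by (auto simp: primes_upto_def)
  have pos: "inverse (1 - 1 / real p) > 0" if "p \<in> primes_upto N" for p
    using p2[OF that] by simp
  have "ln (\<Prod>p\<in>primes_upto N. inverse (1 - 1 / real p))
      = (\<Sum>p\<in>primes_upto N. ln (inverse (1 - 1 / real p)))"
    using pos by (intro ln_prod[OF finite_primes_upto]) (metis less_irrefl)
  also have "\<dots> \<le> (\<Sum>p\<in>primes_upto N. 1 / real p + 1 / (real p * (real p - 1)))"
    using p2 by (intro sum_mono ln_inverse_one_minus_inverse_le)
  also have "\<dots> \<le> ln (ln (real N)) + c"
    using sum_inverse_primes_upto_le[OF assms] sum_inverse_primes_upto_times_pred_le[of N]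
    by (simp add: sum.distrib c_def)
  finally have "exp (ln (\<Prod>p\<in>primes_upto N. inverse (1 - 1 / real p))) \<le> exp (ln (ln (real N)) + c)"
    by simp
  then have "(\<Prod>p\<in>primes_upto N. inverse (1 - 1 / real p)) \<le> exp (ln (ln (real N)) + c)"
    using prod_pos[of "primes_upto N", OF pos] by simp
  also have "\<dots> = exp c * ln (real N)"
    using assms by (simp add: exp_add)
  finally show ?thesis
    unfolding c_def .
qed

lemma prod_inverse_one_minus_inverse_primes_upto_le:
  "\<exists>C. \<forall>x\<ge>2. (\<Prod>p\<in>primes_upto (nat \<lfloor>x\<rfloor>). inverse (1 - 1 / real p)) \<le> C * ln x"
proof (intro exI allI impI)
  fix x :: real assume "x \<ge> 2"
  then have N: "nat \<lfloor>x\<rfloor> \<ge> 2" "real (nat \<lfloor>x\<rfloor>) \<le> x"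
    by (simp_all add: le_nat_floor)
  have "(\<Prod>p\<in>primes_upto (nat \<lfloor>x\<rfloor>). inverse (1 - 1 / real p))
      \<le> exp (2 + 2 * ln 4 / ln 2 - ln (ln 2)) * ln (real (nat \<lfloor>x\<rfloor>))"
    by (rule prod_inverse_one_minus_inverse_primes_upto_le_nat[OF N(1)])
  also have "\<dots> \<le> exp (2 + 2 * ln 4 / ln 2 - ln (ln 2)) * ln x"
    using N by (intro mult_left_mono) simp_all
  finally show "(\<Prod>p\<in>primes_upto (nat \<lfloor>x\<rfloor>). inverse (1 - 1 / real p))
      \<le> exp (2 + 2 * ln 4 / ln 2 - ln (ln 2)) * ln x" .
qed

section \<open>Roots of P(n; H) modulo d\<close>

definition roots :: "int set \<Rightarrow> nat \<Rightarrow> nat set" where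
  "roots H d = {a. a < d \<and> int d dvd Ppoly H (int a)}"

lemma nu_eq_card_roots: "nu H d = card (roots H d)"
  unfolding nu_def roots_def ..

lemma Ppoly_dvd_iff_dvd_mod: "int m dvd Ppoly H (int a) \<longleftrightarrow> int m dvd Ppoly H (int (a mod m))"
proof -
  have "[Ppoly H (int a) = Ppoly H (int (a mod m))] (mod int m)"
    unfolding Ppoly_def by (intro cong_prod cong_add) (simp_all add: cong_def zmod_int)
  then show ?thesis
    by (simp add: cong_def dvd_eq_mod_eq_0)
qed

text \<open>Chinese remainder theorem: reduction modulo \<open>m\<close> and \<open>n\<close> is a bijection from the roots
  modulo \<open>mn\<close> onto pairs of roots.\<close>
lemma nu_mult:
  assumes "coprime m n" "m \<noteq> 0" "n \<noteq> 0"
  shows "nu H (m * n) = nu H m * nu H n"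
proof -
  have "bij_betw (\<lambda>x. (x mod m, x mod n)) (roots H (m * n)) (roots H m \<times> roots H n)"
  proof (rule bij_betwI')
    fix x y assume "x \<in> roots H (m * n)" "y \<in> roots H (m * n)"
    then have "x < m * n" "y < m * n" by (simp_all add: roots_def)
    moreover have "[x = y] (mod m * n)" if "[x = y] (mod m)" "[x = y] (mod n)"
      using that assms(1) by (rule coprime_cong_mult_nat)
    ultimately show "((x mod m, x mod n) = (y mod m, y mod n)) = (x = y)"
      by (auto simp: cong_def)
  next
    fix x assume "x \<in> roots H (m * n)"
    then have "int m dvd Ppoly H (int x)" "int n dvd Ppoly H (int x)"
      by (auto simp: roots_def intro: dvd_mult_left dvd_mult_right)
    then show "(x mod m, x mod n) \<in> roots H m \<times> roots H n"
      using assms by (simp add: roots_def Ppoly_dvd_iff_dvd_mod[of m H x] Ppoly_dvd_iff_dvd_mod[of n H x])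
  next
    fix ab assume "ab \<in> roots H m \<times> roots H n"
    then obtain a b where ab: "ab = (a, b)" "a \<in> roots H m" "b \<in> roots H n" by auto
    then obtain x where x: "x < m * n" "x mod m = a" "x mod n = b"
      using binary_chinese_remainder_unique_nat[OF assms, of a b]
      by (auto simp: roots_def cong_def)
    have "int m dvd Ppoly H (int x)" "int n dvd Ppoly H (int x)"
      using ab x by (simp_all add: roots_def Ppoly_dvd_iff_dvd_mod[of m H x] Ppoly_dvd_iff_dvd_mod[of n H x])
    then have "int (m * n) dvd Ppoly H (int x)"
      using assms(1) by (simp add: divides_mult)
    then show "\<exists>x\<in>roots H (m * n). ab = (x mod m, x mod n)"
      using ab x by (auto simp: roots_def)
  qed
  then show ?thesis
    by (simp add: nu_eq_card_roots bij_betw_same_card card_cartesian_product)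
qed

lemma nu_1: "nu H 1 = 1"
proof -
  have "roots H 1 = {0}" by (auto simp: roots_def)
  then show ?thesis by (simp add: nu_eq_card_roots)
qed

lemma nu_prod_primes:
  assumes "finite A" "\<And>p. p \<in> A \<Longrightarrow> prime p"
  shows "nu H (\<Prod>A) = (\<Prod>p\<in>A. nu H p)"
  using assms
proof (induction A rule: finite_induct)
  case (insert q A)
  have "coprime q (\<Prod>A)"
    using insert by (intro prod_coprime_right) (metis insertCI primes_coprime)
  moreover have "0 \<notin> insert q A"
    using insert.prems by (metis not_prime_0)
  then have "q \<noteq> 0" "\<Prod>A \<noteq> 0"
    using insert.hyps(1) by auto
  ultimately show ?case
    using insert by (simp add: nu_mult)
next
  case empty
  show ?case using nu_1[of H] by simp
qed

lemma prod_prime_factors_squarefree: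
  fixes d :: nat
  assumes "squarefree d"
  shows "\<Prod>(prime_factors d) = d"
proof -
  have "d \<noteq> 0" using assms by (metis not_squarefree_0)
  then have "(\<Prod>p\<in>prime_factors d. p ^ multiplicity p d) = d"
    using prod_prime_factors[of d] by simp
  moreover have "multiplicity p d = 1" if "p \<in> prime_factors d" for p
    using assms that \<open>d \<noteq> 0\<close> squarefree_factorial_semiring'[of d] by auto
  ultimately show ?thesis by simp
qed

lemma nu_squarefree:
  assumes "squarefree d"
  shows "nu H d = (\<Prod>p\<in>prime_factors d. nu H p)"
  using nu_prod_primes[of "prime_factors d" H] prod_prime_factors_squarefree[OF assms] by auto

lemma roots_prime:
  assumes "prime p" "finite H"
  shows "roots H p = (\<lambda>h. nat ((- h) mod int p)) ` H"
proof -
  have p0: "int p > 0" using assms(1) prime_gt_0_nat by simp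
  have root_iff: "int p dvd int a + h \<longleftrightarrow> a = nat ((- h) mod int p)" if "a < p" for a h
  proof -
    have "int p dvd int a + h \<longleftrightarrow> int a mod int p = (- h) mod int p"
      by (simp add: mod_eq_dvd_iff)
    also have "\<dots> \<longleftrightarrow> a = nat ((- h) mod int p)"
      using that p0 by (auto simp: nat_eq_iff)
    finally show ?thesis .
  qed
  have dvd_iff: "int p dvd Ppoly H (int a) \<longleftrightarrow> (\<exists>h\<in>H. int p dvd int a + h)" for a
    unfolding Ppoly_def using assms by (simp add: prime_dvd_prod_iff)
  have bound: "nat ((- h) mod int p) < p" for h
    using p0 by (simp add: nat_less_iff)
  have "a \<in> roots H p \<longleftrightarrow> (\<exists>h\<in>H. a = nat ((- h) mod int p))" for a
  proof
    assume "a \<in> roots H p"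
    then show "\<exists>h\<in>H. a = nat ((- h) mod int p)"
      using dvd_iff root_iff by (auto simp: roots_def)
  next
    assume "\<exists>h\<in>H. a = nat ((- h) mod int p)"
    then obtain h where h: "h \<in> H" "a = nat ((- h) mod int p)" by blast
    then have "a < p" using bound by simp
    then have "int p dvd int a + h"
      using root_iff[OF \<open>a < p\<close>, of h] h(2) by blast
    then show "a \<in> roots H p"
      using h(1) \<open>a < p\<close> dvd_iff by (auto simp: roots_def)
  qed
  then show ?thesis by blast
qed

lemma nu_prime_pos:
  assumes "prime p" "finite H" "H \<noteq> {}"
  shows "nu H p > 0"
  using assms by (simp add: nu_eq_card_roots roots_prime card_gt_0_iff)

definition residue_distinct_bound :: "int set \<Rightarrow> nat" where
  "residue_distinct_bound H = nat (2 * (\<Sum>h\<in>H. \<bar>h\<bar>))"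

lemma nu_prime_eq_card:
  assumes "prime p" "finite H" "p > residue_distinct_bound H"
  shows "nu H p = card H"
proof -
  have p0: "int p > 0" using assms(1) prime_gt_0_nat by simp
  have "inj_on (\<lambda>h. nat ((- h) mod int p)) H"
  proof (rule inj_onI)
    fix x y assume xy: "x \<in> H" "y \<in> H" "nat ((- x) mod int p) = nat ((- y) mod int p)"
    then have dvd: "int p dvd y - x"
      using p0 by (simp add: nat_eq_iff mod_eq_dvd_iff)
    have small: "\<bar>y - x\<bar> < int p"
    proof -
      have "\<bar>x\<bar> \<le> (\<Sum>h\<in>H. \<bar>h\<bar>)" "\<bar>y\<bar> \<le> (\<Sum>h\<in>H. \<bar>h\<bar>)"
        using xy assms(2) by (auto intro: member_le_sum)
      then show ?thesis
        using assms(3) unfolding residue_distinct_bound_def by linarith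
    qed
    show "x = y"
    proof (rule ccontr)
      assume "x \<noteq> y"
      then have "\<bar>int p\<bar> \<le> \<bar>y - x\<bar>"
        using dvd by (intro dvd_imp_le_int) simp_all
      then show False using small by simp
    qed
  qed
  then show ?thesis
    using assms by (simp add: nu_eq_card_roots roots_prime card_image)
qed

lemma nu_prime_less:
  assumes "admissible H" "prime p"
  shows "nu H p < p"
  using assms unfolding admissible_def by blast

section \<open>The singular series\<close>

definition sing_factor :: "int set \<Rightarrow> nat \<Rightarrow> real" where
  "sing_factor H p = (1 - real (nu H p) / real p) * (1 - 1 / real p) powi (- int (card H))"

definition sing_partial :: "int set \<Rightarrow> nat \<Rightarrow> real" where
  "sing_partial H n = (\<Prod>p\<in>primes_upto n. sing_factor H p)"

lemma sing_factor_altdef: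
  "sing_factor H p = (1 - real (nu H p) / real p) * inverse ((1 - 1 / real p) ^ card H)"
  unfolding sing_factor_def by (simp add: power_int_minus)

lemma sing_factor_pos:
  assumes "admissible H" "prime p"
  shows "sing_factor H p > 0"
proof -
  have "real (nu H p) / real p < 1"
    using nu_prime_less[OF assms] by (simp add: divide_less_eq)
  moreover have "1 / real p < 1"
    using prime_gt_1_nat[OF assms(2)] by simp
  ultimately show ?thesis
    unfolding sing_factor_altdef by simp
qed

text \<open>For large \<open>p\<close> we have \<open>\<nu>\<^sub>p = k\<close>, and the factor is at most \<open>1\<close> by Bernoulli's inequality
  \<open>(1 - 1/p)\<^sup>k \<ge> 1 - k/p\<close>.\<close>
lemma sing_factor_le_1:
  assumes "prime p" "finite H" "p > residue_distinct_bound H"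
  shows "sing_factor H p \<le> 1"
proof -
  have p: "real p \<ge> 2" using prime_ge_2_nat[OF assms(1)] by simp
  have "1 - real (card H) / real p \<le> (1 - 1 / real p) ^ card H"
    using Bernoulli_inequality[of "- 1 / real p" "card H"] p by simp
  moreover have "(1 - 1 / real p) ^ card H > 0"
    using p by simp
  ultimately show ?thesis
    unfolding sing_factor_altdef nu_prime_eq_card[OF assms] by (simp add: divide_simps)
qed

lemma sing_partial_pos:
  assumes "admissible H"
  shows "sing_partial H n > 0"
  unfolding sing_partial_def using sing_factor_pos[OF assms]
  by (intro prod_pos) (simp add: primes_upto_def)

lemma sing_partial_Suc_le:
  assumes "finite H" "admissible H" "n \<ge> residue_distinct_bound H"
  shows "sing_partial H (Suc n) \<le> sing_partial H n"
proof (cases "prime (Suc n)")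
  case True
  have "sing_factor H (Suc n) \<le> 1"
    using sing_factor_le_1[OF True assms(1)] assms(3) by simp
  moreover have "0 \<le> sing_partial H n"
    using sing_partial_pos[OF assms(2), of n] by simp
  ultimately have "sing_factor H (Suc n) * sing_partial H n \<le> 1 * sing_partial H n"
    by (rule mult_right_mono)
  then show ?thesis
    using True Suc_notin_primes_upto[of n] by (simp add: sing_partial_def primes_upto_Suc)
qed (simp add: sing_partial_def primes_upto_Suc)

text \<open>The partial products decrease from \<open>residue_distinct_bound H\<close> on; in particular the
  product defining the singular series converges.\<close>
lemma sing_series_bounds:
  assumes "finite H" "admissible H" "n \<ge> residue_distinct_bound H"
  shows "0 \<le> sing_series H" "sing_series H \<le> sing_partial H n"
proof -
  define M where "M = residue_distinct_bound H"
  define X where "X i = sing_partial H (i + M)" for i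
  have "decseq X"
    unfolding X_def M_def using assms(1,2) by (intro decseq_SucI) (simp add: sing_partial_Suc_le)
  moreover have X_nonneg: "0 \<le> X i" for i
    unfolding X_def using sing_partial_pos[OF assms(2)] less_imp_le by blast
  ultimately obtain L where "X \<longlonglongrightarrow> L"
    using decseq_convergent by blast
  moreover have "sing_partial H \<longlonglongrightarrow> L"
    using \<open>X \<longlonglongrightarrow> L\<close> unfolding X_def by (rule LIMSEQ_offset)
  then have "sing_series H = L"
    unfolding sing_series_def sing_partial_def sing_factor_def primes_upto_def by (rule limI)
  ultimately show "0 \<le> sing_series H" "sing_series H \<le> sing_partial H n"
    using decseq_ge[OF \<open>decseq X\<close>, of L "n - M"] X_nonneg assms(3)
    by (auto simp: X_def M_def intro: LIMSEQ_le_const)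
qed

section \<open>The sum over r\<close>

definition inv_ff1_prime :: "int set \<Rightarrow> nat \<Rightarrow> real" where
  "inv_ff1_prime H p = real (nu H p) / (real p - real (nu H p))"

lemma inverse_ff1_eq_prod: "1 / ff1 H r = (\<Prod>p\<in>prime_factors r. inv_ff1_prime H p)"
  unfolding ff1_def inv_ff1_prime_def by (simp add: prod_dividef)

lemma inv_ff1_prime_nonneg:
  assumes "admissible H" "prime p"
  shows "inv_ff1_prime H p \<ge> 0"
  using nu_prime_less[OF assms] unfolding inv_ff1_prime_def by simp

lemma one_le_prod_one_plus_inv_ff1_prime:
  assumes "admissible H" "\<And>p. p \<in> A \<Longrightarrow> prime p"
  shows "1 \<le> (\<Prod>p\<in>A. 1 + inv_ff1_prime H p)"
  using inv_ff1_prime_nonneg[OF assms(1)] assms(2) by (intro prod_ge_1) simp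

lemma one_plus_inv_ff1_prime:
  assumes "admissible H" "prime p"
  shows "1 + inv_ff1_prime H p = real p / (real p - real (nu H p))"
  using nu_prime_less[OF assms] unfolding inv_ff1_prime_def by (simp add: field_simps)

lemma ff_div_ff1_eq_prod:
  assumes "squarefree d" "finite H" "H \<noteq> {}" "admissible H"
  shows "ff H d / ff1 H d = (\<Prod>p\<in>prime_factors d. 1 + inv_ff1_prime H p)"
proof -
  have d: "real d = (\<Prod>p\<in>prime_factors d. real p)"
    by (simp only: of_nat_prod[symmetric] prod_prime_factors_squarefree[OF assms(1)])
  have nu_d: "real (nu H d) = (\<Prod>p\<in>prime_factors d. real (nu H p))"
    by (simp add: nu_squarefree[OF assms(1)])
  have "ff H d = (\<Prod>p\<in>prime_factors d. real p / real (nu H p))"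
    unfolding ff_def d nu_d by (rule prod_dividef[symmetric])
  then have "ff H d / ff1 H d
      = (\<Prod>p\<in>prime_factors d. (real p / real (nu H p)) / ((real p - real (nu H p)) / real (nu H p)))"
    unfolding ff1_def by (simp only: prod_dividef)
  also have "\<dots> = (\<Prod>p\<in>prime_factors d. 1 + inv_ff1_prime H p)"
  proof (rule prod.cong[OF refl])
    fix p assume "p \<in> prime_factors d"
    then have p: "prime p" by auto
    then have "real (nu H p) \<noteq> 0"
      using nu_prime_pos[OF p assms(2,3)] by simp
    then show "(real p / real (nu H p)) / ((real p - real (nu H p)) / real (nu H p)) = 1 + inv_ff1_prime H p"
      by (simp add: one_plus_inv_ff1_prime[OF assms(4) p])
  qed
  finally show ?thesis .
qed

text \<open>Squarefree numbers are determined by their sets of prime factors, so the sum is part of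
  the expansion of the product.\<close>
lemma sum_prod_prime_factors_le_prod_one_plus:
  fixes g :: "nat \<Rightarrow> real"
  assumes "finite T" "\<And>p. p \<in> T \<Longrightarrow> g p \<ge> 0"
    and "\<And>r. r \<in> A \<Longrightarrow> squarefree r \<and> prime_factors r \<subseteq> T"
  shows "(\<Sum>r\<in>A. \<Prod>p\<in>prime_factors r. g p) \<le> (\<Prod>p\<in>T. 1 + g p)"
proof -
  have inj: "inj_on prime_factors A"
    using assms(3) by (intro inj_onI) (metis prod_prime_factors_squarefree)
  have sub: "prime_factors ` A \<subseteq> Pow T"
    using assms(3) by auto
  have "(\<Sum>r\<in>A. \<Prod>p\<in>prime_factors r. g p) = (\<Sum>S\<in>prime_factors ` A. \<Prod>p\<in>S. g p)"
    using inj by (simp add: sum.reindex)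
  also have "\<dots> \<le> (\<Sum>S\<in>Pow T. \<Prod>p\<in>S. g p)"
    using assms(1,2) sub by (intro sum_mono2 prod_nonneg) auto
  also have "\<dots> = (\<Prod>p\<in>T. g p + 1)"
    using prod_add[OF assms(1), of g "\<lambda>_. 1"] by simp
  finally show ?thesis
    by (simp add: add.commute)
qed

lemma mu_squared: "real_of_int ((mu r)\<^sup>2) = (if squarefree r then 1 else 0)"
  unfolding mu_def by (simp add: power_mult[symmetric])

lemma ln_div_le_ln:
  fixes x R :: real
  assumes "1 \<le> x" "x < R"
  shows "0 \<le> ln (R / x)" "ln (R / x) \<le> ln R"
proof -
  show "0 \<le> ln (R / x)"
    using assms by (simp add: le_divide_eq)
  show "ln (R / x) \<le> ln R"
    using assms by (simp add: ln_div)
qed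

lemma lambda_sum_index_bounds:
  assumes "d > 0" "0 < r" "real r < R / real d"
  shows "1 \<le> real r * real d" "real r * real d < R" "r \<le> nat \<lfloor>R\<rfloor>"
proof -
  show "1 \<le> real r * real d" "real r * real d < R"
    using assms by (simp_all add: pos_less_divide_eq mult_ge1_I)
  moreover have "real r * 1 \<le> real r * real d"
    using assms(1) by (intro mult_left_mono) simp_all
  ultimately show "r \<le> nat \<lfloor>R\<rfloor>"
    by (intro le_nat_floor) simp
qed

lemma lambda_sum_nonneg:
  assumes "admissible H" "d > 0"
  shows "0 \<le> (\<Sum>r\<in>{r. 0 < r \<and> real r < R / real d \<and> coprime r d}.
                  real_of_int ((mu r)\<^sup>2) / ff1 H r * (ln (R / (real r * real d))) ^ l)"
proof (intro sum_nonneg mult_nonneg_nonneg divide_nonneg_nonneg zero_le_power)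
  fix r assume r: "r \<in> {r. 0 < r \<and> real r < R / real d \<and> coprime r d}"
  show "0 \<le> ff1 H r"
    unfolding ff1_def
  proof (intro prod_nonneg)
    fix p assume "p \<in> prime_factors r"
    then have "nu H p < p"
      by (intro nu_prime_less[OF assms(1)]) auto
    then show "0 \<le> (real p - real (nu H p)) / real (nu H p)"
      by simp
  qed
  show "0 \<le> ln (R / (real r * real d))"
    using r lambda_sum_index_bounds[OF assms(2)] by (intro ln_div_le_ln) auto
qed simp

lemma lambda_sum_term_le:
  assumes "admissible H" "1 \<le> x" "x < R"
  shows "real_of_int ((mu r)\<^sup>2) / ff1 H r * (ln (R / x)) ^ l
    \<le> (ln R) ^ l * (if squarefree r then \<Prod>p\<in>prime_factors r. inv_ff1_prime H p else 0)"
proof -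
  define g where "g = (\<Prod>p\<in>prime_factors r. inv_ff1_prime H p)"
  have "(ln (R / x)) ^ l \<le> (ln R) ^ l"
    using ln_div_le_ln[OF assms(2,3)] by (intro power_mono)
  moreover have "0 \<le> g"
    unfolding g_def using inv_ff1_prime_nonneg[OF assms(1)] by (intro prod_nonneg) auto
  ultimately have "g * (ln (R / x)) ^ l \<le> (ln R) ^ l * g"
    by (simp add: mult.commute mult_left_mono)
  moreover have "real_of_int ((mu r)\<^sup>2) / ff1 H r = (if squarefree r then g else 0)"
    unfolding mu_squared g_def using inverse_ff1_eq_prod[of H r] by simp
  ultimately show ?thesis
    unfolding g_def by simp
qed

lemma prime_factors_subset_primes_upto_coprime:
  assumes "0 < r" "r \<le> N" "coprime r d"
  shows "prime_factors r \<subseteq> {p\<in>primes_upto N. \<not> p dvd d}"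
proof
  fix p assume p: "p \<in> prime_factors r"
  then have "prime p" "p dvd r" by auto
  moreover from this have "p \<le> N"
    using assms(1,2) by (meson dvd_imp_le le_trans)
  moreover have "\<not> p dvd d"
    using \<open>prime p\<close> \<open>p dvd r\<close> assms(3) by (metis coprime_common_divisor not_prime_unit)
  ultimately show "p \<in> {p\<in>primes_upto N. \<not> p dvd d}"
    by (simp add: primes_upto_def)
qed

text \<open>Every \<open>r\<close> in the sum is at most \<open>R\<close> and coprime to \<open>d\<close>, so only the Euler factors
  at primes \<open>p \<le> R\<close> not dividing \<open>d\<close> occur.\<close>
lemma lambda_sum_le:
  assumes "admissible H" "d > 0" "R > 1"
  shows "(\<Sum>r\<in>{r. 0 < r \<and> real r < R / real d \<and> coprime r d}.
            real_of_int ((mu r)\<^sup>2) / ff1 H r * (ln (R / (real r * real d))) ^ l)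
         \<le> (ln R) ^ l * (\<Prod>p\<in>{p\<in>primes_upto (nat \<lfloor>R\<rfloor>). \<not> p dvd d}. 1 + inv_ff1_prime H p)"
proof -
  define A where "A = {r. 0 < r \<and> real r < R / real d \<and> coprime r d}"
  define T where "T = {p\<in>primes_upto (nat \<lfloor>R\<rfloor>). \<not> p dvd d}"
  have rR: "1 \<le> real r * real d" "real r * real d < R" and r_le: "r \<le> nat \<lfloor>R\<rfloor>" if "r \<in> A" for r
    using that lambda_sum_index_bounds[OF assms(2)] by (auto simp: A_def)
  have "finite A"
    using r_le by (intro finite_subset[of A "{..nat \<lfloor>R\<rfloor>}"]) auto
  have "(\<Sum>r\<in>A. real_of_int ((mu r)\<^sup>2) / ff1 H r * (ln (R / (real r * real d))) ^ l)
      \<le> (\<Sum>r\<in>A. (ln R) ^ l * (if squarefree r then \<Prod>p\<in>prime_factors r. inv_ff1_prime H p else 0))"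
    using rR by (intro sum_mono lambda_sum_term_le[OF assms(1)])
  also have "\<dots> = (ln R) ^ l * (\<Sum>r\<in>{r\<in>A. squarefree r}. \<Prod>p\<in>prime_factors r. inv_ff1_prime H p)"
    using \<open>finite A\<close> by (simp add: sum_distrib_left sum.inter_filter)
  also have "\<dots> \<le> (ln R) ^ l * (\<Prod>p\<in>T. 1 + inv_ff1_prime H p)"
  proof (intro mult_left_mono sum_prod_prime_factors_le_prod_one_plus)
    show "0 \<le> inv_ff1_prime H p" if "p \<in> T" for p
      using that inv_ff1_prime_nonneg[OF assms(1)] by (simp add: T_def primes_upto_def)
    show "squarefree r \<and> prime_factors r \<subseteq> T" if "r \<in> {r\<in>A. squarefree r}" for r
    proof -
      have "0 < r" "r \<le> nat \<lfloor>R\<rfloor>" "coprime r d" "squarefree r"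
        using that r_le by (auto simp: A_def)
      then show ?thesis
        unfolding T_def using prime_factors_subset_primes_upto_coprime by blast
    qed
    show "0 \<le> (ln R) ^ l"
      using assms(3) by simp
  qed (simp add: T_def)
  finally show ?thesis
    unfolding A_def T_def .
qed

section \<open>The bound for the weights\<close>

text \<open>The local factors of \<open>\<SS>\<close> and of \<open>\<Sum>\<^sub>r \<mu>\<^sup>2(r)/f\<^sub>1(r)\<close> are \<open>(1 - \<nu>\<^sub>p/p)(1 - 1/p)\<^sup>-\<^sup>k\<close> and
  \<open>p/(p - \<nu>\<^sub>p)\<close>, whose product \<open>(1 - 1/p)\<^sup>-\<^sup>k\<close> no longer depends on \<open>\<H>\<close>.\<close>
lemma sing_partial_mult_prod_one_plus:
  assumes "admissible H"
  shows "sing_partial H N * (\<Prod>p\<in>primes_upto N. 1 + inv_ff1_prime H p)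
    = (\<Prod>p\<in>primes_upto N. inverse (1 - 1 / real p)) ^ card H"
proof -
  have "sing_factor H p * (1 + inv_ff1_prime H p) = inverse (1 - 1 / real p) ^ card H"
    if "p \<in> primes_upto N" for p
  proof -
    have p: "prime p" using that by (simp add: primes_upto_def)
    have "real (nu H p) < real p" "real p > 0"
      using nu_prime_less[OF assms p] prime_gt_0_nat[OF p] by simp_all
    then have cancel: "(1 - real (nu H p) / real p) * (real p / (real p - real (nu H p))) = 1"
      by (simp add: field_simps)
    have "sing_factor H p * (1 + inv_ff1_prime H p)
        = (1 - real (nu H p) / real p) * (real p / (real p - real (nu H p)))
          * inverse ((1 - 1 / real p) ^ card H)"
      unfolding sing_factor_altdef one_plus_inv_ff1_prime[OF assms p] by (simp only: mult_ac)
    then show ?thesis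
      unfolding cancel by (simp add: power_inverse)
  qed
  then show ?thesis
    unfolding sing_partial_def by (simp add: prod.distrib[symmetric] prod_power_distrib)
qed

lemma prod_one_plus_split_le:
  assumes "admissible H" "squarefree d" "d \<le> N"
  shows "(\<Prod>p\<in>prime_factors d. 1 + inv_ff1_prime H p)
      * (\<Prod>p\<in>{p\<in>primes_upto N. \<not> p dvd d}. 1 + inv_ff1_prime H p)
    \<le> (\<Prod>p\<in>primes_upto N. 1 + inv_ff1_prime H p)"
proof -
  have "d > 0" using assms(2) by (metis not_squarefree_0 gr0I)
  have "prime_factors d \<subseteq> primes_upto N"
  proof
    fix p assume "p \<in> prime_factors d"
    then have "prime p" "p \<le> d"
      using \<open>d > 0\<close> by (auto intro: dvd_imp_le)
    then show "p \<in> primes_upto N"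
      using assms(3) by (simp add: primes_upto_def)
  qed
  then have "prime_factors d \<union> {p\<in>primes_upto N. \<not> p dvd d} \<subseteq> primes_upto N"
    by auto
  moreover have "1 \<le> 1 + inv_ff1_prime H p" if "p \<in> primes_upto N" for p
    using that inv_ff1_prime_nonneg[OF assms(1)] by (simp add: primes_upto_def)
  ultimately have "(\<Prod>p\<in>prime_factors d \<union> {p\<in>primes_upto N. \<not> p dvd d}. 1 + inv_ff1_prime H p)
      \<le> (\<Prod>p\<in>primes_upto N. 1 + inv_ff1_prime H p)"
    by (intro prod_mono2) fastforce+
  then show ?thesis
    by (subst (asm) prod.union_disjoint) auto
qed

lemma abs_lambda_w_le:
  assumes "finite H" "H \<noteq> {}" "admissible H" "squarefree d"
  shows "\<bar>lambda_w H R d l\<bar> \<le> ff H d / ff1 H d * sing_series H *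
    (\<Sum>r\<in>{r. 0 < r \<and> real r < R / real d \<and> coprime r d}.
       real_of_int ((mu r)\<^sup>2) / ff1 H r * (ln (R / (real r * real d))) ^ l)"
    (is "_ \<le> ?Q * ?S * ?\<Sigma>")
proof -
  have "d > 0" using assms(4) by (metis not_squarefree_0 gr0I)
  have "0 \<le> ?Q"
    unfolding ff_div_ff1_eq_prod[OF assms(4,1,2,3)]
    using one_le_prod_one_plus_inv_ff1_prime[OF assms(3), of "prime_factors d"] by fastforce
  moreover have "0 \<le> ?S"
    using sing_series_bounds(1)[OF assms(1,3) order.refl] .
  moreover have "0 \<le> ?\<Sigma>"
    using lambda_sum_nonneg[OF assms(3) \<open>d > 0\<close>] .
  ultimately have "0 \<le> ?Q * ?S * ?\<Sigma>"
    by (intro mult_nonneg_nonneg)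
  then obtain X where X: "X = ?Q * ?S * ?\<Sigma>" "0 \<le> X"
    by blast
  then have "lambda_w H R d l = real_of_int (mu d) * (X / fact l)"
    unfolding lambda_w_def by (simp only: mult_ac times_divide_eq_left times_divide_eq_right)
  then have "\<bar>lambda_w H R d l\<bar> = \<bar>real_of_int (mu d)\<bar> * (X / fact l)"
    using X(2) by (simp add: abs_mult)
  also have "\<dots> \<le> 1 * (X / fact l)"
    using X(2) by (intro mult_right_mono) (simp_all add: mu_def)
  also have "\<dots> \<le> X"
    using X(2) by (simp add: divide_le_eq mult_le_cancel_left1)
  finally show ?thesis
    using X(1) by simp
qed

lemma abs_lambda_w_le_mertens_product:
  assumes "finite H" "H \<noteq> {}" "admissible H" "squarefree d" "real d < R"
    and "real (residue_distinct_bound H) \<le> R"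
  shows "\<bar>lambda_w H R d l\<bar>
    \<le> (ln R) ^ l * (\<Prod>p\<in>primes_upto (nat \<lfloor>R\<rfloor>). inverse (1 - 1 / real p)) ^ card H"
proof -
  define N where "N = nat \<lfloor>R\<rfloor>"
  define Q where "Q = (\<Prod>p\<in>prime_factors d. 1 + inv_ff1_prime H p)"
  define G where "G = (\<Prod>p\<in>primes_upto N. 1 + inv_ff1_prime H p)"
  define G' where "G' = (\<Prod>p\<in>{p\<in>primes_upto N. \<not> p dvd d}. 1 + inv_ff1_prime H p)"
  define \<Sigma> where "\<Sigma> = (\<Sum>r\<in>{r. 0 < r \<and> real r < R / real d \<and> coprime r d}.
       real_of_int ((mu r)\<^sup>2) / ff1 H r * (ln (R / (real r * real d))) ^ l)"
  have "d > 0" using assms(4) by (metis not_squarefree_0 gr0I)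
  have "d \<le> N" "residue_distinct_bound H \<le> N"
    using assms(5,6) by (simp_all add: N_def le_nat_floor)
  have "R > 1" using assms(5) \<open>d > 0\<close> by linarith
  have "1 \<le> Q" "1 \<le> G'"
    unfolding Q_def G'_def
    by (rule one_le_prod_one_plus_inv_ff1_prime[OF assms(3)], auto simp: primes_upto_def)+
  then have "0 \<le> Q" "0 \<le> G'"
    by simp_all
  have "\<bar>lambda_w H R d l\<bar> \<le> Q * sing_series H * \<Sigma>"
    using abs_lambda_w_le[OF assms(1-4)] unfolding Q_def \<Sigma>_def ff_div_ff1_eq_prod[OF assms(4,1-3)] .
  also have "\<dots> \<le> Q * sing_partial H N * ((ln R) ^ l * G')"
    using sing_series_bounds[OF assms(1,3) \<open>residue_distinct_bound H \<le> N\<close>] \<open>0 \<le> Q\<close>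
      lambda_sum_nonneg[OF assms(3) \<open>d > 0\<close>] lambda_sum_le[OF assms(3) \<open>d > 0\<close> \<open>R > 1\<close>]
    unfolding \<Sigma>_def G'_def N_def by (intro mult_mono) simp_all
  also have "\<dots> = sing_partial H N * (Q * G') * (ln R) ^ l"
    by (simp only: mult_ac)
  also have "\<dots> \<le> sing_partial H N * G * (ln R) ^ l"
    using prod_one_plus_split_le[OF assms(3,4) \<open>d \<le> N\<close>] sing_partial_pos[OF assms(3), of N]
      \<open>R > 1\<close> unfolding Q_def G_def G'_def by (intro mult_right_mono mult_left_mono) simp_all
  also have "\<dots> = (ln R) ^ l * (\<Prod>p\<in>primes_upto N. inverse (1 - 1 / real p)) ^ card H"
    unfolding G_def sing_partial_mult_prod_one_plus[OF assms(3)] by simp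
  finally show ?thesis
    unfolding N_def .
qed

theorem lemma9:
  fixes k :: nat
  assumes "k \<ge> 2"
  shows "\<exists>C::real. \<forall>H::int set. finite H \<and> card H = k \<and> admissible H \<longrightarrow>
           (\<exists>R0::real. \<forall>R::real. R \<ge> R0 \<and> R > 1 \<longrightarrow>
              (\<forall>l::nat. \<forall>d::nat. l \<le> k \<and> squarefree d \<and> real d < R \<longrightarrow>
                 \<bar>lambda_w H R d l\<bar> \<le> C * (ln R) ^ (k + l)))"
proof -
  obtain C where mertens:
    "\<And>x. x \<ge> 2 \<Longrightarrow> (\<Prod>p\<in>primes_upto (nat \<lfloor>x\<rfloor>). inverse (1 - 1 / real p)) \<le> C * ln x"
    using prod_inverse_one_minus_inverse_primes_upto_le by blast
  have "\<bar>lambda_w H R d l\<bar> \<le> C ^ k * (ln R) ^ (k + l)"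
    if H: "finite H" "card H = k" "admissible H" and R: "real (residue_distinct_bound H) + 2 \<le> R"
      and d: "squarefree d" "real d < R" for H R d l
  proof -
    define M where "M = (\<Prod>p\<in>primes_upto (nat \<lfloor>R\<rfloor>). inverse (1 - 1 / real p))"
    have "0 \<le> M"
      unfolding M_def by (intro prod_nonneg) (auto simp: primes_upto_def dest!: prime_ge_2_nat)
    have "H \<noteq> {}" "real (residue_distinct_bound H) \<le> R"
      using H(2) assms R by auto
    then have "\<bar>lambda_w H R d l\<bar> \<le> (ln R) ^ l * M ^ k"
      unfolding M_def H(2)[symmetric] by (intro abs_lambda_w_le_mertens_product H d)
    also have "\<dots> \<le> (ln R) ^ l * (C * ln R) ^ k"
      using mertens[of R] R \<open>0 \<le> M\<close> unfolding M_def by (intro mult_left_mono power_mono) simp_all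
    also have "\<dots> = C ^ k * (ln R) ^ (k + l)"
      by (simp add: power_mult_distrib power_add mult_ac)
    finally show ?thesis .
  qed
  then show ?thesis
    by (intro exI[of _ "C ^ k"] allI impI exI[of _ "real (residue_distinct_bound _) + 2"]) auto
qed

end
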